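(* Let $\mathbb{X}$ be a regular CW complex equipped with an acyclic partial matching $\mu$, and let $\Sigma = \{(x_\bullet > y_\bullet)\}$ denote the collection of entrance paths of $\mathbb{X}$ which correspond to the matchings $\mu(y_\bullet) = x_\bullet$. Then $\Sigma$ is a Morse system on the entrance path category $\mathbf{Ent}\,\mathbb{X}$.
   Context: A p-category is a small category enriched over posets; $f\Rightarrow g$ denotes the order on a hom-poset and $f\circ g$ denotes composition ``$f$ then $g$''. A morphism $f:x\to y$ is an atom if it is minimal in $\mathbf{E}(x,y)$, $x=y$ implies $f=1_x$, and $g\circ h\Rightarrow f$ with $g:x\to z$, $h:z\to y$ forces $(g,h)=(1_x,f)$ or $(f,1_y)$. A p-category $\mathbf{E}$ is cellular if every nonempty hom-poset contains an atom. For a regular CW complex, $x>y$ means the closure of cell $y$ lies in the boundary of $x$; the entrance path category $\mathbf{Ent}\,\mathbb{X}$ has cells as objects, strictly descending sequences $(x=x_0>\cdots>x_k=y)$ as morphisms $x\to y$, ordered by subsequence inclusion, composed by concatenation. An acyclic partial matching is a partition of cells into $D,U,M$ with a bijection $\mu:D\to U$ such that each $d$ is a codimension-one face of $\mu(d)$ and the transitive closure of ($d\prec_\mu d'$ iff $d$ is a codimension-one face of $\mu(d')$) is a partial order. A Morse system on a cellular category $\mathbf{E}$ is a collection $\Sigma=\{f_\bullet:x_\bullet\to y_\bullet\}$ satisfying: (Exhaustion) each $f:x\to y$ in $\Sigma$ is the atom of $\mathbf{E}(x,y)$ with $x\neq y$, and no other morphism of $\Sigma$ has as source or target any $w$ with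 $\mathbf{E}(x,w)\neq\varnothing\neq\mathbf{E}(w,y)$; (Order) the transitive closure of $f_0\blacktriangleright f_1$ iff $\mathbf{E}(x_0,y_1)\neq\varnothing$ is a partial order on $\Sigma$; (Lifting) for distinct $f_0,f_1\in\Sigma$, if $g:x_0\to x_1$ and $g':y_0\to y_1$ satisfy $f_0\circ g'\Rightarrow g\circ f_1$, then there is $p:y_0\to x_1$ with $f_0\circ p\Rightarrow g$ and $g'\Rightarrow p\circ f_1$; (Switching) for distinct $f_0,f_1\in\Sigma$, if $\mathbf{E}(x_0,x_1)$ and $\mathbf{E}(y_0,y_1)$ are nonempty with atoms $h,\ell$, and some $v:x_0\to y_1$ satisfies $f_0\circ\ell\Rightarrow v$ and $h\circ f_1\Rightarrow v$, then $\mathbf{E}(y_0,x_1)$ is nonempty and its atom $q$ satisfies $f_0\circ q\circ f_1\Rightarrow v$. *)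

theory Defs
  imports Main "HOL-Library.Sublist"
begin

text \<open>A p-category is presented by
  hom :: objects => objects => morphism set,
  cmp f g  = composition "f then g",
  ident x   = identity 1_x,
  le f g    = the order f => g on hom-posets.\<close>

definition is_atom ::
  "('o \<Rightarrow> 'o \<Rightarrow> 'm set) \<Rightarrow> ('m \<Rightarrow> 'm \<Rightarrow> 'm) \<Rightarrow> ('o \<Rightarrow> 'm) \<Rightarrow> ('m \<Rightarrow> 'm \<Rightarrow> bool)
   \<Rightarrow> 'm \<Rightarrow> 'o \<Rightarrow> 'o \<Rightarrow> bool" where
  "is_atom hom cmp ident le f x y \<longleftrightarrow>
     f \<in> hom x y \<and>
     (\<forall>g\<in>hom x y. le g f \<longrightarrow> g = f) \<and>
     (x = y \<longrightarrow> f = ident x) \<and>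
     (\<forall>z g h. g \<in> hom x z \<and> h \<in> hom z y \<and> le (cmp g h) f \<longrightarrow>
        (g, h) = (ident x, f) \<or> (g, h) = (f, ident y))"

definition cellular ::
  "('o \<Rightarrow> 'o \<Rightarrow> 'm set) \<Rightarrow> ('m \<Rightarrow> 'm \<Rightarrow> 'm) \<Rightarrow> ('o \<Rightarrow> 'm) \<Rightarrow> ('m \<Rightarrow> 'm \<Rightarrow> bool) \<Rightarrow> bool" where
  "cellular hom cmp ident le \<longleftrightarrow>
     (\<forall>x y. hom x y \<noteq> {} \<longrightarrow> (\<exists>f. is_atom hom cmp ident le f x y))"

text \<open>The order relation f0 |> f1 iff E(x0,y1) nonempty; its transitive closure must be
  a partial order (it is automatically transitive and reflexive on S, so the
  requirement is antisymmetry).\<close>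

definition morse_system ::
  "('o \<Rightarrow> 'o \<Rightarrow> 'm set) \<Rightarrow> ('m \<Rightarrow> 'm \<Rightarrow> 'm) \<Rightarrow> ('o \<Rightarrow> 'm) \<Rightarrow> ('m \<Rightarrow> 'm \<Rightarrow> bool)
   \<Rightarrow> ('m \<times> 'o \<times> 'o) set \<Rightarrow> bool" where
  "morse_system hom cmp ident le S \<longleftrightarrow>
     cellular hom cmp ident le \<and>
     \<comment> \<open>Exhaustion\<close>
     (\<forall>(f, x, y)\<in>S. f \<in> hom x y \<and> x \<noteq> y \<and> is_atom hom cmp ident le f x y \<and>
        (\<forall>(f', x', y')\<in>S. (f', x', y') \<noteq> (f, x, y) \<longrightarrow>
           (\<forall>w. hom x w \<noteq> {} \<and> hom w y \<noteq> {} \<longrightarrow> x' \<noteq> w \<and> y' \<noteq> w))) \<and>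
     \<comment> \<open>Order\<close>
     antisym ({((f0, x0, y0), (f1, x1, y1)). (f0, x0, y0) \<in> S \<and> (f1, x1, y1) \<in> S
                  \<and> hom x0 y1 \<noteq> {}}\<^sup>+) \<and>
     \<comment> \<open>Lifting\<close>
     (\<forall>(f0, x0, y0)\<in>S. \<forall>(f1, x1, y1)\<in>S. (f0, x0, y0) \<noteq> (f1, x1, y1) \<longrightarrow>
        (\<forall>g g'. g \<in> hom x0 x1 \<and> g' \<in> hom y0 y1 \<and> le (cmp f0 g') (cmp g f1) \<longrightarrow>
           (\<exists>p\<in>hom y0 x1. le (cmp f0 p) g \<and> le g' (cmp p f1)))) \<and>
     \<comment> \<open>Switching\<close>
     (\<forall>(f0, x0, y0)\<in>S. \<forall>(f1, x1, y1)\<in>S. (f0, x0, y0) \<noteq> (f1, x1, y1) \<longrightarrow>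
        (\<forall>h l v. is_atom hom cmp ident le h x0 x1 \<and> is_atom hom cmp ident le l y0 y1 \<and>
            v \<in> hom x0 y1 \<and> le (cmp f0 l) v \<and> le (cmp h f1) v \<longrightarrow>
           hom y0 x1 \<noteq> {} \<and>
           (\<forall>q. is_atom hom cmp ident le q y0 x1 \<longrightarrow> le (cmp (cmp f0 q) f1) v)))"

text \<open>A cell complex is given by its set of cells X, the face relation gt x y
  ("x > y": the closure of y lies in the boundary of x) and the dimension of cells.\<close>

definition face_poset :: "'a set \<Rightarrow> ('a \<Rightarrow> 'a \<Rightarrow> bool) \<Rightarrow> ('a \<Rightarrow> nat) \<Rightarrow> bool" where
  "face_poset X gt dim \<longleftrightarrow>
     (\<forall>x\<in>X. \<not> gt x x) \<and>
     (\<forall>x\<in>X. \<forall>y\<in>X. \<forall>z\<in>X. gt x y \<longrightarrow> gt y z \<longrightarrow> gt x z) \<and>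
     (\<forall>x\<in>X. \<forall>y\<in>X. gt x y \<longrightarrow> dim y < dim x)"

definition codim_one_face :: "('a \<Rightarrow> 'a \<Rightarrow> bool) \<Rightarrow> ('a \<Rightarrow> nat) \<Rightarrow> 'a \<Rightarrow> 'a \<Rightarrow> bool" where
  "codim_one_face gt dim y x \<longleftrightarrow> gt x y \<and> dim x = dim y + 1"

definition acyclic_partial_matching ::
  "'a set \<Rightarrow> ('a \<Rightarrow> 'a \<Rightarrow> bool) \<Rightarrow> ('a \<Rightarrow> nat) \<Rightarrow> 'a set \<Rightarrow> 'a set \<Rightarrow> 'a set \<Rightarrow> ('a \<Rightarrow> 'a) \<Rightarrow> bool" where
  "acyclic_partial_matching X gt dim D U M \<mu> \<longleftrightarrow>
     D \<union> U \<union> M = X \<and> D \<inter> U = {} \<and> D \<inter> M = {} \<and> U \<inter> M = {} \<and>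
     bij_betw \<mu> D U \<and>
     (\<forall>d\<in>D. codim_one_face gt dim d (\<mu> d)) \<and>
     antisym ({(d, d'). d \<in> D \<and> d' \<in> D \<and> codim_one_face gt dim d (\<mu> d')}\<^sup>+)"

text \<open>Morphisms x -> y are the strictly descending sequences x = x0 > ... > xk = y,
  encoded as nonempty lists; composition is concatenation (sharing the middle
  object), identities are one-element lists, and the order is subsequence inclusion.\<close>

definition ent_hom :: "'a set \<Rightarrow> ('a \<Rightarrow> 'a \<Rightarrow> bool) \<Rightarrow> 'a \<Rightarrow> 'a \<Rightarrow> 'a list set" where
  "ent_hom X gt x y = {xs. xs \<noteq> [] \<and> hd xs = x \<and> last xs = y \<and> set xs \<subseteq> X \<and> sorted_wrt gt xs}"

definition ent_comp :: "'a list \<Rightarrow> 'a list \<Rightarrow> 'a list" where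
  "ent_comp f g = f @ tl g"

definition ent_id :: "'a \<Rightarrow> 'a list" where
  "ent_id x = [x]"

definition ent_le :: "'a list \<Rightarrow> 'a list \<Rightarrow> bool" where
  "ent_le f g \<longleftrightarrow> subseq f g"

definition matching_paths :: "'a set \<Rightarrow> ('a \<Rightarrow> 'a) \<Rightarrow> ('a list \<times> 'a \<times> 'a) set" where
  "matching_paths D \<mu> = {([x, y], x, y) | x y. y \<in> D \<and> x = \<mu> y}"

end

theory Submission
  imports Defs
begin

text \<open>An entrance path is a chain of cells, so it is determined by its set of cells, and for
  chains the subsequence order is inclusion of these sets. Hence the atoms are the chains
  \<open>[x]\<close> and \<open>[x, y]\<close>, and every Morse-system axiom for \<open>\<Sigma>\<close> becomes bookkeeping of cells,
  driven by two facts about the matching: no cell lies strictly between \<open>\<mu> y\<close> and \<open>y\<close>, since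
  their dimensions differ by one, and \<open>\<mu>\<close> is injective with image disjoint from \<open>D\<close>.
  For the order axiom, an entrance path from \<open>\<mu> y\<^sub>0\<close> to \<open>y\<^sub>1\<close> forces
  \<open>dim y\<^sub>1 \<le> dim y\<^sub>0\<close>, with equality only if \<open>y\<^sub>1\<close> is a codimension-one face of
  \<open>\<mu> y\<^sub>0\<close>, i.e. a step of the relation that acyclicity of the matching controls.\<close>

lemma sorted_wrt_mem_related:
  "sorted_wrt R xs \<Longrightarrow> a \<in> set xs \<Longrightarrow> b \<in> set xs \<Longrightarrow> a = b \<or> R a b \<or> R b a"
  by (induction xs) auto

lemma antisym_trancl_if_lex_descending:
  fixes h :: "'a \<Rightarrow> 'c::order"
  assumes r: "r \<subseteq> A \<times> A" and g: "inj_on g A" and P: "antisym (P\<^sup>+)"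
    and descend: "\<And>a b. (a, b) \<in> r \<Longrightarrow> h b \<le> h a \<and> (h b = h a \<longrightarrow> (g b, g a) \<in> P\<^sup>+)"
  shows "antisym (r\<^sup>+)"
proof (rule antisymI)
  have trancl_descend: "h b \<le> h a \<and> (h b = h a \<longrightarrow> (g b, g a) \<in> P\<^sup>+)" if "(a, b) \<in> r\<^sup>+" for a b
    using that
  proof (induction rule: trancl_induct)
    case (base b)
    then show ?case by (rule descend)
  next
    case (step b c)
    then show ?case
      using descend[OF step.hyps(2)] by (metis order.antisym order.trans trancl_trans)
  qed
  fix a b assume ab: "(a, b) \<in> r\<^sup>+" and ba: "(b, a) \<in> r\<^sup>+"
  then have "(g a, g b) \<in> P\<^sup>+" "(g b, g a) \<in> P\<^sup>+"
    using trancl_descend[OF ab] trancl_descend[OF ba] by auto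
  then have "g a = g b" using antisymD[OF P] by blast
  moreover have "a \<in> A" "b \<in> A" using trancl_subset_Sigma[OF r] ab by auto
  ultimately show "a = b" using g by (simp add: inj_on_eq_iff)
qed

lemma ent_hom_memD:
  assumes "xs \<in> ent_hom X gt x y" "a \<in> set xs"
  shows "a \<in> X \<and> (a = x \<or> gt x a) \<and> (a = y \<or> gt a y)"
proof -
  have ne: "xs \<noteq> []" and s: "sorted_wrt gt xs" and "set xs \<subseteq> X" "hd xs = x" "last xs = y"
    using assms(1) by (auto simp: ent_hom_def)
  moreover have "a = hd xs \<or> gt (hd xs) a"
    using ne s assms(2) by (cases xs) auto
  moreover have "a = last xs \<or> gt a (last xs)"
  proof -
    have "sorted_wrt gt (butlast xs @ [last xs])" using s ne by simp
    moreover have "a \<in> set (butlast xs @ [last xs])" using assms(2) ne by simp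
    ultimately show ?thesis by (auto simp: sorted_wrt_append)
  qed
  ultimately show ?thesis using assms(2) by blast
qed

lemma ent_hom_endpoints:
  assumes "xs \<in> ent_hom X gt x y"
  shows "x \<in> set xs" "y \<in> set xs"
  using assms hd_in_set last_in_set by (fastforce simp: ent_hom_def)+

lemma set_ent_comp:
  assumes "f \<in> ent_hom X gt x z" "g \<in> ent_hom X gt z y"
  shows "set (ent_comp f g) = set f \<union> set g"
proof -
  obtain t where "g = z # t" using assms(2) by (cases g) (auto simp: ent_hom_def)
  then show ?thesis using ent_hom_endpoints(2)[OF assms(1)] by (auto simp: ent_comp_def)
qed

locale strict_order_on =
  fixes X :: "'a set" and gt :: "'a \<Rightarrow> 'a \<Rightarrow> bool"
  assumes irrefl_gt: "x \<in> X \<Longrightarrow> \<not> gt x x"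
    and trans_gt: "\<lbrakk>x \<in> X; y \<in> X; z \<in> X; gt x y; gt y z\<rbrakk> \<Longrightarrow> gt x z"
begin

lemma asym_gt: "\<lbrakk>x \<in> X; y \<in> X; gt x y\<rbrakk> \<Longrightarrow> \<not> gt y x"
  using irrefl_gt trans_gt by blast

lemma subseq_if_subset:
  "\<lbrakk>sorted_wrt gt ys; set ys \<subseteq> X; sorted_wrt gt xs; set xs \<subseteq> set ys\<rbrakk> \<Longrightarrow> subseq xs ys"
proof (induction ys arbitrary: xs)
  case Nil
  then show ?case by simp
next
  case (Cons b bs)
  show ?case
  proof (cases xs)
    case Nil
    then show ?thesis by simp
  next
    case (Cons a as)
    have "b \<in> X" using Cons.prems(2) by simp
    show ?thesis
    proof (cases "a = b")
      case True
      then have "set as \<subseteq> set bs"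
        using Cons.prems(3,4) Cons irrefl_gt[OF \<open>b \<in> X\<close>] by auto
      then show ?thesis using Cons.IH Cons.prems Cons True by simp
    next
      case False
      then have "gt b a" "a \<in> X" using Cons.prems Cons by auto
      then have "b \<notin> set xs"
        using Cons.prems(3) Cons False asym_gt[OF \<open>b \<in> X\<close>] by auto
      then have "set xs \<subseteq> set bs" using Cons.prems(4) by auto
      then show ?thesis using Cons.IH Cons.prems by (simp add: list_emb_Cons)
    qed
  qed
qed

lemma ent_le_iff:
  assumes "xs \<in> ent_hom X gt a b" "ys \<in> ent_hom X gt c d"
  shows "ent_le xs ys \<longleftrightarrow> set xs \<subseteq> set ys"
  using assms subseq_if_subset by (auto simp: ent_le_def ent_hom_def dest: list_emb_set)

lemma ent_hom_eq_iff:
  assumes "xs \<in> ent_hom X gt a b" "ys \<in> ent_hom X gt c d"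
  shows "xs = ys \<longleftrightarrow> set xs = set ys"
  using ent_le_iff[OF assms] ent_le_iff[OF assms(2,1)] subseq_order.antisym
  by (auto simp: ent_le_def)

lemma ent_hom_nonempty_iff:
  "ent_hom X gt x y \<noteq> {} \<longleftrightarrow> x \<in> X \<and> y \<in> X \<and> (x = y \<or> gt x y)"
proof
  assume "ent_hom X gt x y \<noteq> {}"
  then obtain xs where "xs \<in> ent_hom X gt x y" by blast
  then show "x \<in> X \<and> y \<in> X \<and> (x = y \<or> gt x y)"
    using ent_hom_memD ent_hom_endpoints by metis
next
  assume "x \<in> X \<and> y \<in> X \<and> (x = y \<or> gt x y)"
  then have "(if x = y then [x] else [x, y]) \<in> ent_hom X gt x y"
    by (auto simp: ent_hom_def)
  then show "ent_hom X gt x y \<noteq> {}" by blast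
qed

lemma ent_comp_in_hom:
  assumes f: "f \<in> ent_hom X gt x z" and g: "g \<in> ent_hom X gt z y"
  shows "ent_comp f g \<in> ent_hom X gt x y"
proof -
  obtain t where g_eq: "g = z # t" using g by (cases g) (auto simp: ent_hom_def)
  have "gt a b" if "a \<in> set f" "b \<in> set t" for a b
  proof -
    have "a \<in> X" "a = z \<or> gt a z" using ent_hom_memD[OF f \<open>a \<in> set f\<close>] by auto
    moreover have "gt z b" "z \<in> X" "b \<in> X" using g g_eq that(2) by (auto simp: ent_hom_def)
    ultimately show ?thesis using trans_gt by blast
  qed
  moreover have "last (f @ t) = y" using f g g_eq by (cases "t = []") (auto simp: ent_hom_def)
  ultimately show ?thesis
    using f g g_eq by (auto simp: ent_hom_def ent_comp_def sorted_wrt_append)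
qed

lemma ent_hom_refl: "x \<in> X \<Longrightarrow> ent_hom X gt x x = {[x]}"
proof (intro equalityI subsetI)
  fix xs assume x: "x \<in> X" and xs: "xs \<in> ent_hom X gt x x"
  have "set xs \<subseteq> {x}" using ent_hom_memD[OF xs] asym_gt[OF x] by blast
  then have "set xs = set [x]" using ent_hom_endpoints(1)[OF xs] by auto
  moreover have "[x] \<in> ent_hom X gt x x" using x by (simp add: ent_hom_def)
  ultimately show "xs \<in> {[x]}" using ent_hom_eq_iff[OF xs] by blast
qed (simp add: ent_hom_def)

lemma is_atom_ent_iff:
  "is_atom (ent_hom X gt) ent_comp ent_id ent_le f x y \<longleftrightarrow> f \<in> ent_hom X gt x y \<and> set f = {x, y}"
proof
  assume atom: "is_atom (ent_hom X gt) ent_comp ent_id ent_le f x y"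
  then have f: "f \<in> ent_hom X gt x y" unfolding is_atom_def by blast
  show "f \<in> ent_hom X gt x y \<and> set f = {x, y}"
  proof (cases "x = y")
    case True
    then have "f = [x]" using atom by (simp add: is_atom_def ent_id_def)
    then show ?thesis using f True by simp
  next
    case False
    then have edge: "[x, y] \<in> ent_hom X gt x y"
      using ent_hom_nonempty_iff f by (auto simp: ent_hom_def)
    then have "ent_le [x, y] f" using ent_le_iff[OF edge f] ent_hom_endpoints[OF f] by simp
    then have "[x, y] = f" using atom edge unfolding is_atom_def by blast
    then show ?thesis using f by auto
  qed
next
  assume "f \<in> ent_hom X gt x y \<and> set f = {x, y}"
  then have f: "f \<in> ent_hom X gt x y" and set_f: "set f = {x, y}" by auto
  have x: "x \<in> X" using ent_hom_memD[OF f ent_hom_endpoints(1)[OF f]] by blast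
  have y: "y \<in> X" using ent_hom_memD[OF f ent_hom_endpoints(2)[OF f]] by blast
  have eq_f: "g = f" if g: "g \<in> ent_hom X gt x y" and sub: "set g \<subseteq> {x, y}" for g
  proof -
    have "set g = set f" using ent_hom_endpoints[OF g] sub set_f by auto
    then show ?thesis using ent_hom_eq_iff[OF g f] by simp
  qed
  show "is_atom (ent_hom X gt) ent_comp ent_id ent_le f x y"
    unfolding is_atom_def
  proof (intro conjI ballI allI impI)
    show "f \<in> ent_hom X gt x y" by (rule f)
  next
    fix g assume "g \<in> ent_hom X gt x y" "ent_le g f"
    then show "g = f" using eq_f ent_le_iff[OF _ f] set_f by simp
  next
    assume "x = y"
    then show "f = ent_id x" using ent_hom_refl[OF x] f by (simp add: ent_id_def)
  next
    fix z g h
    assume gh: "g \<in> ent_hom X gt x z \<and> h \<in> ent_hom X gt z y \<and> ent_le (ent_comp g h) f"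
    then have g: "g \<in> ent_hom X gt x z" and h: "h \<in> ent_hom X gt z y" by auto
    have sub: "set g \<union> set h \<subseteq> {x, y}"
      using gh ent_le_iff[OF ent_comp_in_hom[OF g h] f] set_ent_comp[OF g h] set_f by simp
    show "(g, h) = (ent_id x, f) \<or> (g, h) = (f, ent_id y)"
    proof (cases "z = x")
      case True
      then have "g = [x]" using g ent_hom_refl[OF x] by simp
      moreover have "h = f" using h True sub by (intro eq_f) auto
      ultimately show ?thesis by (simp add: ent_id_def)
    next
      case False
      then have "z = y" using ent_hom_endpoints(2)[OF g] sub by auto
      then have "h = [y]" using h ent_hom_refl[OF y] by simp
      moreover have "g = f" using g \<open>z = y\<close> sub by (intro eq_f) auto
      ultimately show ?thesis by (simp add: ent_id_def)
    qed
  qed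
qed

lemma cellular_ent: "cellular (ent_hom X gt) ent_comp ent_id ent_le"
  unfolding cellular_def is_atom_ent_iff
proof (intro allI impI)
  fix x y assume "ent_hom X gt x y \<noteq> {}"
  then have "(if x = y then [x] else [x, y]) \<in> ent_hom X gt x y"
    using ent_hom_nonempty_iff by (auto simp: ent_hom_def)
  then show "\<exists>f. f \<in> ent_hom X gt x y \<and> set f = {x, y}" by (auto split: if_splits)
qed

lemma ent_hom_tail_from:
  assumes xs: "xs \<in> ent_hom X gt x y" and a: "a \<in> set xs"
  obtains zs where "a # zs \<in> ent_hom X gt a y" "set (a # zs) = {c \<in> set xs. c = a \<or> gt a c}"
proof -
  obtain ys zs where xs_eq: "xs = ys @ a # zs" using split_list[OF a] by blast
  have X: "set xs \<subseteq> X" and "last xs = y" and sorted: "sorted_wrt gt (ys @ a # zs)"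
    using xs xs_eq by (auto simp: ent_hom_def)
  then have tail: "sorted_wrt gt (a # zs)" and above: "\<And>c. c \<in> set ys \<Longrightarrow> gt c a"
    by (auto simp: sorted_wrt_append)
  have "\<not> (c = a \<or> gt a c)" if "c \<in> set ys" for c
    using above[OF that] that X xs_eq irrefl_gt asym_gt by auto
  then have "set (a # zs) = {c \<in> set xs. c = a \<or> gt a c}"
    using tail xs_eq by auto
  moreover have "a # zs \<in> ent_hom X gt a y"
    using tail X \<open>last xs = y\<close> xs_eq by (simp add: ent_hom_def)
  ultimately show thesis using that by blast
qed

end

locale morse_matching =
  fixes X :: "'a set" and gt :: "'a \<Rightarrow> 'a \<Rightarrow> bool" and dim :: "'a \<Rightarrow> nat"
    and D U M :: "'a set" and \<mu> :: "'a \<Rightarrow> 'a"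
  assumes face_poset: "face_poset X gt dim"
    and matching: "acyclic_partial_matching X gt dim D U M \<mu>"
begin

sublocale strict_order_on X gt
  using face_poset unfolding face_poset_def by unfold_locales blast+

lemma matched_cell:
  assumes "y \<in> D"
  shows "y \<in> X" "\<mu> y \<in> X" "gt (\<mu> y) y" "dim (\<mu> y) = dim y + 1"
proof -
  have "D \<union> U \<union> M = X" "\<mu> ` D = U" "codim_one_face gt dim y (\<mu> y)"
    using matching assms unfolding acyclic_partial_matching_def bij_betw_def by blast+
  then show "y \<in> X" "\<mu> y \<in> X" "gt (\<mu> y) y" "dim (\<mu> y) = dim y + 1"
    using assms unfolding codim_one_face_def by blast+
qed

lemma matched_notin_D: "y \<in> D \<Longrightarrow> \<mu> y \<notin> D"
  using matching unfolding acyclic_partial_matching_def bij_betw_def by blast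

lemma matched_inj: "y \<in> D \<Longrightarrow> y' \<in> D \<Longrightarrow> \<mu> y = \<mu> y' \<longleftrightarrow> y = y'"
  using matching unfolding acyclic_partial_matching_def bij_betw_def inj_on_def by blast

lemma dim_less: "\<lbrakk>x \<in> X; y \<in> X; gt x y\<rbrakk> \<Longrightarrow> dim y < dim x"
  using face_poset by (simp add: face_poset_def)

lemma no_cell_between:
  assumes "y \<in> D" "w \<in> X" "gt (\<mu> y) w" "gt w y"
  shows False
proof -
  have "dim y < dim w" "dim w < dim (\<mu> y)"
    using assms dim_less matched_cell(1,2)[OF \<open>y \<in> D\<close>] by auto
  then show False using matched_cell(4)[OF \<open>y \<in> D\<close>] by simp
qed

lemma matching_path_in_hom: "y \<in> D \<Longrightarrow> [\<mu> y, y] \<in> ent_hom X gt (\<mu> y) y"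
  using matched_cell[of y] by (simp add: ent_hom_def)

lemma matching_path_atom: "y \<in> D \<Longrightarrow> is_atom (ent_hom X gt) ent_comp ent_id ent_le [\<mu> y, y] (\<mu> y) y"
  using matching_path_in_hom by (simp add: is_atom_ent_iff)

lemma matching_paths_exhaustion:
  assumes y: "y \<in> D" and y': "y' \<in> D" and "y' \<noteq> y"
    and "ent_hom X gt (\<mu> y) w \<noteq> {}" "ent_hom X gt w y \<noteq> {}"
  shows "\<mu> y' \<noteq> w \<and> y' \<noteq> w"
proof -
  have "w = \<mu> y \<or> w = y"
    using assms(4,5) no_cell_between[OF y] by (auto simp: ent_hom_nonempty_iff)
  then show ?thesis using matched_inj[OF y' y] matched_notin_D y y' \<open>y' \<noteq> y\<close> by auto
qed

lemma matching_step_descends: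
  assumes y0: "y0 \<in> D" and y1: "y1 \<in> D" and "ent_hom X gt (\<mu> y0) y1 \<noteq> {}"
  shows "dim y1 \<le> dim y0 \<and> (dim y1 = dim y0 \<longrightarrow> codim_one_face gt dim y1 (\<mu> y0))"
proof -
  have "gt (\<mu> y0) y1"
    using assms(3) matched_notin_D[OF y0] y1 by (auto simp: ent_hom_nonempty_iff)
  then have "dim y1 < dim (\<mu> y0)" using dim_less matched_cell(1,2) y0 y1 by blast
  then show ?thesis using \<open>gt (\<mu> y0) y1\<close> matched_cell(4)[OF y0] by (auto simp: codim_one_face_def)
qed

lemma matching_paths_order:
  "antisym ({((f0, x0, y0), (f1, x1, y1)). (f0, x0, y0) \<in> matching_paths D \<mu>
     \<and> (f1, x1, y1) \<in> matching_paths D \<mu> \<and> ent_hom X gt x0 y1 \<noteq> {}}\<^sup>+)"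
proof (rule antisym_trancl_if_lex_descending)
  show "inj_on (\<lambda>(f, x, y). y) (matching_paths D \<mu>)"
    by (auto simp: matching_paths_def inj_on_def)
  show "antisym ({(d, d'). d \<in> D \<and> d' \<in> D \<and> codim_one_face gt dim d (\<mu> d')}\<^sup>+)"
    using matching by (simp add: acyclic_partial_matching_def)
  fix a b
  assume "(a, b) \<in> {((f0, x0, y0), (f1, x1, y1)). (f0, x0, y0) \<in> matching_paths D \<mu>
     \<and> (f1, x1, y1) \<in> matching_paths D \<mu> \<and> ent_hom X gt x0 y1 \<noteq> {}}"
  then obtain y0 y1 where ab: "a = ([\<mu> y0, y0], \<mu> y0, y0)" "b = ([\<mu> y1, y1], \<mu> y1, y1)"
    and y01: "y0 \<in> D" "y1 \<in> D" and "ent_hom X gt (\<mu> y0) y1 \<noteq> {}"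
    by (auto simp: matching_paths_def)
  from y01 this(5) have "dim y1 \<le> dim y0 \<and> (dim y1 = dim y0 \<longrightarrow> codim_one_face gt dim y1 (\<mu> y0))"
    by (rule matching_step_descends)
  then have "dim y1 \<le> dim y0 \<and> (dim y1 = dim y0 \<longrightarrow>
      (y1, y0) \<in> {(d, d'). d \<in> D \<and> d' \<in> D \<and> codim_one_face gt dim d (\<mu> d')}\<^sup>+)"
    using y01 by (simp add: r_into_trancl')
  then show "(\<lambda>(f, x, y). dim y) b \<le> (\<lambda>(f, x, y). dim y) a \<and>
    ((\<lambda>(f, x, y). dim y) b = (\<lambda>(f, x, y). dim y) a \<longrightarrow>
     ((\<lambda>(f, x, y). y) b, (\<lambda>(f, x, y). y) a)
       \<in> {(d, d'). d \<in> D \<and> d' \<in> D \<and> codim_one_face gt dim d (\<mu> d')}\<^sup>+)"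
    unfolding ab by simp
qed blast

lemma matching_paths_lifting:
  assumes y0: "y0 \<in> D" and y1: "y1 \<in> D" and ne: "y0 \<noteq> y1"
    and g: "g \<in> ent_hom X gt (\<mu> y0) (\<mu> y1)" and g': "g' \<in> ent_hom X gt y0 y1"
    and le: "ent_le (ent_comp [\<mu> y0, y0] g') (ent_comp g [\<mu> y1, y1])"
  shows "\<exists>p \<in> ent_hom X gt y0 (\<mu> y1).
           ent_le (ent_comp [\<mu> y0, y0] p) g \<and> ent_le g' (ent_comp p [\<mu> y1, y1])"
proof -
  have f0: "[\<mu> y0, y0] \<in> ent_hom X gt (\<mu> y0) y0" and f1: "[\<mu> y1, y1] \<in> ent_hom X gt (\<mu> y1) y1"
    using matching_path_in_hom y0 y1 by blast+
  have g'_below: "set g' \<subseteq> set g \<union> {\<mu> y1, y1}"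
    using le ent_le_iff[OF ent_comp_in_hom[OF f0 g'] ent_comp_in_hom[OF g f1]]
      set_ent_comp[OF f0 g'] set_ent_comp[OF g f1] by simp
  have "y0 \<in> set g"
    using g'_below ent_hom_endpoints(1)[OF g'] matched_notin_D[OF y1] y0 ne by auto
  then obtain zs where p: "y0 # zs \<in> ent_hom X gt y0 (\<mu> y1)"
    and set_p: "set (y0 # zs) = {c \<in> set g. c = y0 \<or> gt y0 c}"
    using ent_hom_tail_from[OF g] by blast
  have "set [\<mu> y0, y0] \<union> set (y0 # zs) \<subseteq> set g"
    using set_p ent_hom_endpoints(1)[OF g] \<open>y0 \<in> set g\<close> by auto
  then have "ent_le (ent_comp [\<mu> y0, y0] (y0 # zs)) g"
    using ent_le_iff[OF ent_comp_in_hom[OF f0 p] g] set_ent_comp[OF f0 p] by simp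
  moreover have "ent_le g' (ent_comp (y0 # zs) [\<mu> y1, y1])"
  proof -
    have "set g' \<subseteq> set (y0 # zs) \<union> set [\<mu> y1, y1]"
      using g'_below set_p ent_hom_memD[OF g'] by auto
    then show ?thesis using ent_le_iff[OF g' ent_comp_in_hom[OF p f1]] set_ent_comp[OF p f1] by simp
  qed
  ultimately show ?thesis using p by blast
qed

lemma matching_paths_switching:
  assumes y0: "y0 \<in> D" and y1: "y1 \<in> D" and ne: "y0 \<noteq> y1"
    and h: "is_atom (ent_hom X gt) ent_comp ent_id ent_le h (\<mu> y0) (\<mu> y1)"
    and l: "is_atom (ent_hom X gt) ent_comp ent_id ent_le l y0 y1"
    and v: "v \<in> ent_hom X gt (\<mu> y0) y1"
    and le0: "ent_le (ent_comp [\<mu> y0, y0] l) v" and le1: "ent_le (ent_comp h [\<mu> y1, y1]) v"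
  shows "ent_hom X gt y0 (\<mu> y1) \<noteq> {} \<and>
    (\<forall>q. is_atom (ent_hom X gt) ent_comp ent_id ent_le q y0 (\<mu> y1) \<longrightarrow>
       ent_le (ent_comp (ent_comp [\<mu> y0, y0] q) [\<mu> y1, y1]) v)"
proof -
  have f0: "[\<mu> y0, y0] \<in> ent_hom X gt (\<mu> y0) y0" and f1: "[\<mu> y1, y1] \<in> ent_hom X gt (\<mu> y1) y1"
    using matching_path_in_hom y0 y1 by blast+
  have h': "h \<in> ent_hom X gt (\<mu> y0) (\<mu> y1)" "set h = {\<mu> y0, \<mu> y1}"
    and l': "l \<in> ent_hom X gt y0 y1" "set l = {y0, y1}"
    using h l by (auto simp: is_atom_ent_iff)
  have cells: "{\<mu> y0, y0, \<mu> y1, y1} \<subseteq> set v"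
    using le0 ent_le_iff[OF ent_comp_in_hom[OF f0 l'(1)] v] set_ent_comp[OF f0 l'(1)]
      le1 ent_le_iff[OF ent_comp_in_hom[OF h'(1) f1] v] set_ent_comp[OF h'(1) f1] l'(2) h'(2)
    by auto
  have "gt (\<mu> y0) (\<mu> y1)"
    using ent_hom_memD[OF v, of "\<mu> y1"] cells matched_inj[OF y0 y1] ne by auto
  then have "\<not> gt (\<mu> y1) y0" using no_cell_between[OF y0] matched_cell[OF y1] by blast
  moreover have "sorted_wrt gt v" using v by (simp add: ent_hom_def)
  ultimately have "y0 = \<mu> y1 \<or> gt y0 (\<mu> y1)"
    using sorted_wrt_mem_related[of gt v y0 "\<mu> y1"] cells by auto
  then have "ent_hom X gt y0 (\<mu> y1) \<noteq> {}"
    using matched_cell y0 y1 by (auto simp: ent_hom_nonempty_iff)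
  moreover have "ent_le (ent_comp (ent_comp [\<mu> y0, y0] q) [\<mu> y1, y1]) v"
    if "is_atom (ent_hom X gt) ent_comp ent_id ent_le q y0 (\<mu> y1)" for q
  proof -
    have q: "q \<in> ent_hom X gt y0 (\<mu> y1)" "set q = {y0, \<mu> y1}"
      using that by (auto simp: is_atom_ent_iff)
    have composite: "ent_comp (ent_comp [\<mu> y0, y0] q) [\<mu> y1, y1] \<in> ent_hom X gt (\<mu> y0) y1"
      using ent_comp_in_hom[OF ent_comp_in_hom[OF f0 q(1)] f1] .
    show ?thesis
      using ent_le_iff[OF composite v] set_ent_comp[OF ent_comp_in_hom[OF f0 q(1)] f1]
        set_ent_comp[OF f0 q(1)] q(2) cells by simp
  qed
  ultimately show ?thesis by blast
qed

end

theorem proposition3p6: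
  fixes X :: "'a set" and gt :: "'a \<Rightarrow> 'a \<Rightarrow> bool" and dim :: "'a \<Rightarrow> nat"
    and D U M :: "'a set" and \<mu> :: "'a \<Rightarrow> 'a"
  assumes "face_poset X gt dim"
    and "acyclic_partial_matching X gt dim D U M \<mu>"
  shows "morse_system (ent_hom X gt) ent_comp ent_id ent_le (matching_paths D \<mu>)"
proof -
  interpret morse_matching X gt dim D U M \<mu>
    using assms by unfold_locales
  have "\<mu> y \<noteq> y" if "y \<in> D" for y
    using matched_notin_D[OF that] that by auto
  show ?thesis
    unfolding morse_system_def
  proof (intro conjI)
    show "cellular (ent_hom X gt) ent_comp ent_id ent_le" by (rule cellular_ent)
  qed (use matching_paths_order \<open>\<And>y. y \<in> D \<Longrightarrow> \<mu> y \<noteq> y\<close> in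
      \<open>auto simp: matching_paths_def matching_path_in_hom matching_path_atom
        dest: matching_paths_exhaustion matching_paths_lifting matching_paths_switching\<close>)
qed

end
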